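(* For each positive integer $k$, let $\alpha(k)$ be the infimum of those $\alpha$ such that every election has a committee of size $k$ that is $\alpha$-undominated. Then $\frac{\alpha(k)}{1 - \ln\alpha(k)} \leq \frac{2}{k+1}$, and $$\alpha(k) \leq \min_{1 \leq k' < k} \left(\left(\frac{k'}{k}\right)^2 \alpha(k') + \frac{4\ln \frac{k}{k'}}{k - k'}\right).$$
   Context: An election consists of a finite set $V$ of $n$ voters, a finite set $C$ of candidates, and for each voter $v$ a strict linear order $\succ_v$ on $C$. A committee is a subset $S \subseteq C$. For a candidate $a$ and committee $S$, write $a \succ_v S$ if $v$ prefers $a$ to every member of $S$, and let $\frac1n|a \succ S| = \frac1n|\{v \in V : a \succ_v S\}|$. A committee $S$ is $\alpha$-undominated if for every candidate $a \in C$, $\frac1n|a \succ S| < \alpha$. The minimum over $1 \le k' < k$ is over integers $k'$. *)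

theory Defs
  imports "HOL-Analysis.Analysis"
begin

text \<open>An election: a finite nonempty voter set V, a finite candidate set C, and for each
voter v a strict linear order P v on C; (a, b) \<in> P v means that v prefers a to b.
Voters and candidates are encoded as natural numbers (any finite election is isomorphic
to one of this form).\<close>

definition election :: "nat set \<Rightarrow> nat set \<Rightarrow> (nat \<Rightarrow> (nat \<times> nat) set) \<Rightarrow> bool" where
  "election V C P \<longleftrightarrow> finite V \<and> V \<noteq> {} \<and> finite C \<and>
     (\<forall>v\<in>V. strict_linear_order_on C (P v) \<and> P v \<subseteq> C \<times> C)"

definition dom_frac :: "nat set \<Rightarrow> (nat \<Rightarrow> (nat \<times> nat) set) \<Rightarrow> nat \<Rightarrow> nat set \<Rightarrow> real" where
  "dom_frac V P a S = real (card {v \<in> V. \<forall>b\<in>S. (a, b) \<in> P v}) / real (card V)"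

definition undominated :: "real \<Rightarrow> nat set \<Rightarrow> nat set \<Rightarrow> (nat \<Rightarrow> (nat \<times> nat) set) \<Rightarrow> nat set \<Rightarrow> bool" where
  "undominated \<alpha> V C P S \<longleftrightarrow> (\<forall>a\<in>C. dom_frac V P a S < \<alpha>)"

definition alpha :: "nat \<Rightarrow> real" where
  "alpha k = Inf {\<alpha>. \<forall>V C P. election V C P \<and> k \<le> card C \<longrightarrow>
      (\<exists>S. S \<subseteq> C \<and> card S = k \<and> undominated \<alpha> V C P S)}"

end

theory Submission
  imports Defs
begin

text \<open>Read a list of candidates as the uniform distribution on its entries. A minimax argument
  (multiplicative weights, against the best response "candidate of a random pair", whose value
  comes from Cauchy-Schwarz) yields a list such that, for every group of j among the n voters and
  every candidate a, the probabilities that the voters of the group rank a random entry weakly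
  above a add up to about n (j/n)^2/2.

  Take k independent entries of the list as the committee. A voter who prefers a to all of them
  ranks at most as many entries above a as above its favourite sampled entry, and that number is
  at least s (for a list of length T) with probability at most (1 - s/T)^k. Comparing with the
  quadratic guarantee, fewer than alpha n voters prefer a to the committee as soon as
  alpha/(1 - ln alpha) > 2/(k+1).

  For the recursive bound only k - k' entries are sampled. The voters whose favourite sampled
  entry is deep form at most a (k'/k)^2 fraction; they get an alpha(k')-undominated committee of
  size k' of their own, and the remaining voters are handled by the sample as before.\<close>

section \<open>Multiplicative weights\<close>

lemma exp_neg_le_chord:
  fixes \<eta> x :: real
  assumes "0 \<le> x" "x \<le> 1"
  shows "exp (- \<eta> * x) \<le> 1 - (1 - exp (- \<eta>)) * x"
proof -
  have "exp ((1 - x) *\<^sub>R 0 + x *\<^sub>R (- \<eta>)) \<le> (1 - x) * exp 0 + x * exp (- \<eta>)"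
    using assms by (intro convex_onD[OF exp_convex]) auto
  then show ?thesis by (simp add: algebra_simps)
qed

lemma multiplicative_weights_step:
  fixes R :: "'r set" and Cs :: "'c set" and M :: "'r \<Rightarrow> 'c \<Rightarrow> real" and L :: "'r \<Rightarrow> real"
  assumes "finite R" "R \<noteq> {}"
    and M_range: "\<And>r c. r \<in> R \<Longrightarrow> c \<in> Cs \<Longrightarrow> 0 \<le> M r c \<and> M r c \<le> 1"
    and best_response: "\<And>w. (\<And>r. r \<in> R \<Longrightarrow> 0 \<le> w r) \<Longrightarrow> sum w R = 1 \<Longrightarrow>
           \<exists>c\<in>Cs. v0 \<le> (\<Sum>r\<in>R. w r * M r c)"
    and "0 \<le> \<eta>"
  shows "\<exists>c\<in>Cs. (\<Sum>r\<in>R. exp (- \<eta> * (M r c + L r)))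
           \<le> (1 - (1 - exp (- \<eta>)) * v0) * (\<Sum>r\<in>R. exp (- \<eta> * L r))"
proof -
  define \<kappa> where "\<kappa> = 1 - exp (- \<eta>)"
  have "0 \<le> \<kappa>" unfolding \<kappa>_def using \<open>0 \<le> \<eta>\<close> by simp
  define \<Phi> where "\<Phi> = (\<Sum>r\<in>R. exp (- \<eta> * L r))"
  have "0 < \<Phi>" unfolding \<Phi>_def using assms(1,2) by (intro sum_pos) auto
  define w where "w r = exp (- \<eta> * L r) / \<Phi>" for r
  have "sum w R = 1" "\<And>r. r \<in> R \<Longrightarrow> 0 \<le> w r"
    using \<open>0 < \<Phi>\<close> by (auto simp: w_def \<Phi>_def sum_divide_distrib[symmetric])
  then obtain c where c: "c \<in> Cs" "v0 \<le> (\<Sum>r\<in>R. w r * M r c)"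
    using best_response by blast
  have weighted: "\<Phi> * (\<Sum>r\<in>R. w r * M r c) = (\<Sum>r\<in>R. exp (- \<eta> * L r) * M r c)"
    unfolding sum_distrib_left using \<open>0 < \<Phi>\<close> by (intro sum.cong refl) (simp add: w_def)
  have "(\<Sum>r\<in>R. exp (- \<eta> * (M r c + L r))) = (\<Sum>r\<in>R. exp (- \<eta> * L r) * exp (- \<eta> * M r c))"
    by (simp add: algebra_simps exp_add[symmetric])
  also have "\<dots> \<le> (\<Sum>r\<in>R. exp (- \<eta> * L r) * (1 - \<kappa> * M r c))"
    using M_range c(1) unfolding \<kappa>_def by (intro sum_mono mult_left_mono exp_neg_le_chord) auto
  also have "\<dots> = \<Phi> - \<kappa> * (\<Sum>r\<in>R. exp (- \<eta> * L r) * M r c)"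
    by (simp add: \<Phi>_def right_diff_distrib sum_subtractf sum_distrib_left mult_ac)
  also have "\<dots> = \<Phi> - \<kappa> * \<Phi> * (\<Sum>r\<in>R. w r * M r c)"
    by (simp only: mult.assoc weighted)
  also have "\<dots> \<le> \<Phi> - \<kappa> * \<Phi> * v0"
    using c(2) \<open>0 \<le> \<kappa>\<close> \<open>0 < \<Phi>\<close> by (intro diff_left_mono mult_left_mono) auto
  finally show ?thesis using c(1) by (auto simp: \<Phi>_def \<kappa>_def algebra_simps)
qed

lemma multiplicative_weights_potential:
  fixes R :: "'r set" and Cs :: "'c set" and M :: "'r \<Rightarrow> 'c \<Rightarrow> real"
  assumes "finite R" "R \<noteq> {}"
    and M_range: "\<And>r c. r \<in> R \<Longrightarrow> c \<in> Cs \<Longrightarrow> 0 \<le> M r c \<and> M r c \<le> 1"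
    and best_response: "\<And>w. (\<And>r. r \<in> R \<Longrightarrow> 0 \<le> w r) \<Longrightarrow> sum w R = 1 \<Longrightarrow>
           \<exists>c\<in>Cs. v0 \<le> (\<Sum>r\<in>R. w r * M r c)"
    and "0 \<le> v0" "v0 \<le> 1" "0 < \<eta>"
  shows "\<exists>cs. length cs = T \<and> set cs \<subseteq> Cs \<and>
    (\<Sum>r\<in>R. exp (- \<eta> * sum_list (map (M r) cs))) \<le> card R * (1 - (1 - exp (- \<eta>)) * v0) ^ T"
proof (induction T)
  case 0
  show ?case by simp
next
  case (Suc T)
  define \<kappa> where "\<kappa> = 1 - exp (- \<eta>)"
  have "0 \<le> \<kappa>" "\<kappa> \<le> 1" unfolding \<kappa>_def using \<open>0 < \<eta>\<close> by auto
  then have rate: "0 \<le> 1 - \<kappa> * v0" using \<open>0 \<le> v0\<close> \<open>v0 \<le> 1\<close> by (simp add: mult_le_one)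
  define \<Phi> where "\<Phi> cs = (\<Sum>r\<in>R. exp (- \<eta> * sum_list (map (M r) cs)))" for cs
  obtain cs where cs: "length cs = T" "set cs \<subseteq> Cs" "\<Phi> cs \<le> card R * (1 - \<kappa> * v0) ^ T"
    using Suc.IH by (auto simp: \<Phi>_def \<kappa>_def)
  have "\<exists>c\<in>Cs. (\<Sum>r\<in>R. exp (- \<eta> * (M r c + sum_list (map (M r) cs)))) \<le> (1 - \<kappa> * v0) * \<Phi> cs"
    unfolding \<Phi>_def \<kappa>_def
    by (rule multiplicative_weights_step[OF assms(1-4) less_imp_le[OF \<open>0 < \<eta>\<close>]])
  then obtain c where c: "c \<in> Cs" "\<Phi> (c # cs) \<le> (1 - \<kappa> * v0) * \<Phi> cs"
    unfolding \<Phi>_def by auto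
  have "\<Phi> (c # cs) \<le> card R * (1 - \<kappa> * v0) ^ Suc T"
    using c(2) mult_left_mono[OF cs(3) rate] by (simp add: algebra_simps)
  then show ?case using cs c(1) unfolding \<Phi>_def \<kappa>_def by (intro exI[of _ "c # cs"]) auto
qed

lemma multiplicative_weights:
  fixes R :: "'r set" and Cs :: "'c set" and M :: "'r \<Rightarrow> 'c \<Rightarrow> real"
  assumes "finite R" "R \<noteq> {}"
    and M_range: "\<And>r c. r \<in> R \<Longrightarrow> c \<in> Cs \<Longrightarrow> 0 \<le> M r c \<and> M r c \<le> 1"
    and best_response: "\<And>w. (\<And>r. r \<in> R \<Longrightarrow> 0 \<le> w r) \<Longrightarrow> sum w R = 1 \<Longrightarrow>
           \<exists>c\<in>Cs. v0 \<le> (\<Sum>r\<in>R. w r * M r c)"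
    and "0 \<le> v0" "v0 \<le> 1" "0 < \<eta>"
  shows "\<exists>cs. length cs = T \<and> set cs \<subseteq> Cs \<and>
     (\<forall>r\<in>R. real T * v0 * (1 - exp (- \<eta>)) - ln (card R) \<le> \<eta> * sum_list (map (M r) cs))"
proof -
  define \<kappa> where "\<kappa> = 1 - exp (- \<eta>)"
  have "0 \<le> \<kappa>" "\<kappa> \<le> 1" unfolding \<kappa>_def using \<open>0 < \<eta>\<close> by auto
  then have rate: "0 \<le> 1 - \<kappa> * v0" using \<open>0 \<le> v0\<close> \<open>v0 \<le> 1\<close> by (simp add: mult_le_one)
  obtain cs where cs: "length cs = T" "set cs \<subseteq> Cs"
    "(\<Sum>r\<in>R. exp (- \<eta> * sum_list (map (M r) cs))) \<le> card R * (1 - \<kappa> * v0) ^ T"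
    using multiplicative_weights_potential[OF assms] unfolding \<kappa>_def by blast
  have "(1 - \<kappa> * v0) ^ T \<le> exp (- \<kappa> * v0) ^ T"
    using rate by (intro power_mono) (auto simp: exp_ge_add_one_self[of "- \<kappa> * v0", simplified])
  also have "\<dots> = exp (- (real T * \<kappa> * v0))"
    by (simp add: exp_of_nat_mult[symmetric])
  finally have decay: "(1 - \<kappa> * v0) ^ T \<le> exp (- (real T * \<kappa> * v0))" .
  have "0 < real (card R)" using assms(1,2) by (simp add: card_gt_0_iff)
  show ?thesis
  proof (intro exI[of _ cs] conjI ballI cs(1,2))
    fix r assume "r \<in> R"
    have "exp (- \<eta> * sum_list (map (M r) cs)) \<le> (\<Sum>r\<in>R. exp (- \<eta> * sum_list (map (M r) cs)))"
      using \<open>r \<in> R\<close> \<open>finite R\<close> by (intro member_le_sum) auto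
    also have "\<dots> \<le> card R * exp (- (real T * \<kappa> * v0))"
      using cs(3) decay \<open>0 < real (card R)\<close> by (meson mult_left_mono less_imp_le order_trans)
    also have "\<dots> = exp (ln (card R) - real T * \<kappa> * v0)"
      using \<open>0 < real (card R)\<close> by (simp add: exp_diff exp_minus field_simps)
    finally show "real T * v0 * (1 - exp (- \<eta>)) - ln (card R) \<le> \<eta> * sum_list (map (M r) cs)"
      unfolding \<kappa>_def by (simp add: algebra_simps)
  qed
qed

lemma multiplicative_weights_rate:
  fixes v0 \<eta> T N :: real
  assumes "0 \<le> v0" "v0 \<le> 1" "0 < \<eta>" "0 \<le> T" "ln N \<le> T * \<eta>\<^sup>2"
  shows "T * (v0 - 2 * \<eta>) * \<eta> \<le> T * v0 * (1 - exp (- \<eta>)) - ln N"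
proof -
  have "\<eta> / (1 + \<eta>) \<le> 1 - exp (- \<eta>)"
  proof -
    have "exp (- \<eta>) \<le> 1 / (1 + \<eta>)"
      using exp_ge_add_one_self[of \<eta>] \<open>0 < \<eta>\<close> by (simp add: exp_minus divide_simps)
    then show ?thesis using \<open>0 < \<eta>\<close> by (simp add: divide_simps algebra_simps)
  qed
  then have upper: "T * v0 * (\<eta> / (1 + \<eta>)) \<le> T * v0 * (1 - exp (- \<eta>))"
    using assms by (intro mult_left_mono) auto
  have "(v0 - \<eta>) * (1 + \<eta>) \<le> v0"
    using mult_nonneg_nonpos[of \<eta> "v0 - 1 - \<eta>"] assms by (simp add: algebra_simps)
  then have "v0 - \<eta> \<le> v0 / (1 + \<eta>)" using \<open>0 < \<eta>\<close> by (simp add: divide_simps)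
  then have "T * (v0 - \<eta>) * \<eta> \<le> T * (v0 / (1 + \<eta>)) * \<eta>"
    using assms by (intro mult_right_mono mult_left_mono) auto
  then have lower: "T * (v0 - \<eta>) * \<eta> \<le> T * v0 * (\<eta> / (1 + \<eta>))" by simp
  have "T * (v0 - 2 * \<eta>) * \<eta> = T * (v0 - \<eta>) * \<eta> - T * \<eta>\<^sup>2"
    by (simp add: algebra_simps power2_eq_square)
  also have "\<dots> \<le> T * v0 * (1 - exp (- \<eta>)) - T * \<eta>\<^sup>2"
    using order_trans[OF lower upper] by (rule diff_right_mono)
  also have "\<dots> \<le> T * v0 * (1 - exp (- \<eta>)) - ln N"
    using assms(5) by (rule diff_left_mono)
  finally show ?thesis .
qed

lemma multiplicative_weights_minimax:
  fixes R :: "'r set" and Cs :: "'c set" and M :: "'r \<Rightarrow> 'c \<Rightarrow> real"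
  assumes "finite R" "R \<noteq> {}"
    and M_range: "\<And>r c. r \<in> R \<Longrightarrow> c \<in> Cs \<Longrightarrow> 0 \<le> M r c \<and> M r c \<le> 1"
    and best_response: "\<And>w. (\<And>r. r \<in> R \<Longrightarrow> 0 \<le> w r) \<Longrightarrow> sum w R = 1 \<Longrightarrow>
           \<exists>c\<in>Cs. v0 \<le> (\<Sum>r\<in>R. w r * M r c)"
    and "0 \<le> v0" "v0 \<le> 1" "0 < \<epsilon>"
  shows "\<forall>\<^sub>F T in sequentially. \<exists>cs. length cs = T \<and> set cs \<subseteq> Cs \<and>
     (\<forall>r\<in>R. real (length cs) * (v0 - \<epsilon>) \<le> sum_list (map (M r) cs))"
proof -
  define \<eta> where "\<eta> = \<epsilon> / 2"
  have "0 < \<eta>" using \<open>0 < \<epsilon>\<close> by (simp add: \<eta>_def)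
  show ?thesis
    unfolding eventually_sequentially
  proof (intro exI[of _ "nat \<lceil>ln (real (card R)) / \<eta>\<^sup>2\<rceil>"] allI impI)
    fix T assume "nat \<lceil>ln (real (card R)) / \<eta>\<^sup>2\<rceil> \<le> T"
    then have "ln (real (card R)) \<le> real T * \<eta>\<^sup>2"
      using \<open>0 < \<eta>\<close> by (simp add: nat_le_iff ceiling_le_iff divide_le_eq)
    then have rate: "real T * (v0 - \<epsilon>) * \<eta> \<le> real T * v0 * (1 - exp (- \<eta>)) - ln (card R)"
      using multiplicative_weights_rate[OF \<open>0 \<le> v0\<close> \<open>v0 \<le> 1\<close> \<open>0 < \<eta>\<close>] by (simp add: \<eta>_def)
    obtain cs where cs: "length cs = T" "set cs \<subseteq> Cs"
      "\<forall>r\<in>R. real T * v0 * (1 - exp (- \<eta>)) - ln (card R) \<le> \<eta> * sum_list (map (M r) cs)"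
      using multiplicative_weights[OF assms(1-6) \<open>0 < \<eta>\<close>, of T] by blast
    have "real T * (v0 - \<epsilon>) \<le> sum_list (map (M r) cs)" if "r \<in> R" for r
    proof -
      have "real T * (v0 - \<epsilon>) * \<eta> \<le> \<eta> * sum_list (map (M r) cs)"
        using rate cs(3) that by fastforce
      then show ?thesis using \<open>0 < \<eta>\<close> by (simp add: mult.commute)
    qed
    then show "\<exists>cs. length cs = T \<and> set cs \<subseteq> Cs \<and>
        (\<forall>r\<in>R. real (length cs) * (v0 - \<epsilon>) \<le> sum_list (map (M r) cs))"
      using cs(1,2) by blast
  qed
qed

section \<open>A well-covering list of candidates\<close>

definition weakly_prefers :: "(nat \<Rightarrow> (nat \<times> nat) set) \<Rightarrow> nat \<Rightarrow> nat \<Rightarrow> nat \<Rightarrow> bool" where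
  "weakly_prefers P v c a \<longleftrightarrow> c = a \<or> (c, a) \<in> P v"

lemma election_voter_order:
  assumes "election V C P" "v \<in> V"
  shows "trans (P v)" "irrefl (P v)" "total_on C (P v)"
  using assms unfolding election_def strict_linear_order_on_def by auto

lemma weakly_prefers_total:
  assumes "election V C P" "v \<in> V" "a \<in> C" "b \<in> C"
  shows "weakly_prefers P v a b \<or> weakly_prefers P v b a"
  using election_voter_order(3)[OF assms(1,2)] assms(3,4)
  unfolding weakly_prefers_def total_on_def by blast

lemma weakly_prefers_strict_trans:
  "trans (P v) \<Longrightarrow> weakly_prefers P v c a \<Longrightarrow> (a, b) \<in> P v \<Longrightarrow> (c, b) \<in> P v"
  unfolding weakly_prefers_def by (auto elim: transE)

lemma exists_ge_weighted_average:
  fixes w g :: "'r \<Rightarrow> real"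
  assumes "finite R" "\<And>r. r \<in> R \<Longrightarrow> 0 \<le> w r" "sum w R = 1"
  shows "\<exists>r\<in>R. (\<Sum>r\<in>R. w r * g r) \<le> g r"
proof -
  have "R \<noteq> {}" using assms(3) by auto
  have "(\<Sum>r\<in>R. w r * g r) \<le> (\<Sum>r\<in>R. w r * Max (g ` R))"
    using assms(1,2) by (intro sum_mono mult_left_mono) auto
  also have "\<dots> = Max (g ` R)" using assms(3) by (simp add: sum_distrib_right[symmetric])
  moreover have "Max (g ` R) \<in> g ` R" using assms(1) \<open>R \<noteq> {}\<close> by (intro Max_in) auto
  ultimately show ?thesis by auto
qed

lemma sum_weighted_overlaps_ge:
  fixes w :: "'r \<Rightarrow> real" and B :: "'r \<Rightarrow> 'v set"
  assumes "finite V" "finite R"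
    and B: "\<And>r. r \<in> R \<Longrightarrow> B r \<subseteq> V \<and> card (B r) = j"
    and w: "\<And>r. r \<in> R \<Longrightarrow> 0 \<le> w r" "sum w R = 1"
  shows "real j ^ 2 / real (card V) \<le> (\<Sum>r1\<in>R. \<Sum>r2\<in>R. w r1 * w r2 * real (card (B r1 \<inter> B r2)))"
proof -
  define \<pi> where "\<pi> v = (\<Sum>r\<in>R. w r * indicator (B r) v)" for v
  have overlap: "real (card (B r1 \<inter> B r2)) = (\<Sum>v\<in>V. indicator (B r1) v * indicator (B r2) v)"
    if "r1 \<in> R" "r2 \<in> R" for r1 r2
  proof -
    have "(\<Sum>v\<in>V. indicator (B r1 \<inter> B r2) v :: real) = real (card (V \<inter> (B r1 \<inter> B r2)))"
      using \<open>finite V\<close> by (simp add: indicator_def sum.If_cases Int_def)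
    moreover have "V \<inter> (B r1 \<inter> B r2) = B r1 \<inter> B r2" using B[OF that(1)] by blast
    ultimately show ?thesis by (simp add: indicator_inter_arith)
  qed
  have "(\<Sum>v\<in>V. \<pi> v) = (\<Sum>r\<in>R. w r * (\<Sum>v\<in>V. indicator (B r) v))"
    unfolding \<pi>_def by (subst sum.swap) (simp add: sum_distrib_left)
  also have "\<dots> = (\<Sum>r\<in>R. w r * real j)"
    using overlap[of r r for r] B by (intro sum.cong refl) (simp add: indicator_inter_arith[symmetric])
  finally have mass: "(\<Sum>v\<in>V. \<pi> v) = real j"
    using w(2) by (simp add: sum_distrib_right[symmetric])
  have "(\<Sum>r1\<in>R. \<Sum>r2\<in>R. w r1 * w r2 * real (card (B r1 \<inter> B r2)))
      = (\<Sum>r1\<in>R. \<Sum>r2\<in>R. \<Sum>v\<in>V. (w r1 * indicator (B r1) v) * (w r2 * indicator (B r2) v))"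
    using overlap by (intro sum.cong refl) (simp add: sum_distrib_left mult_ac)
  also have "\<dots> = (\<Sum>r1\<in>R. \<Sum>v\<in>V. \<Sum>r2\<in>R. (w r1 * indicator (B r1) v) * (w r2 * indicator (B r2) v))"
    by (intro sum.cong refl sum.swap)
  also have "\<dots> = (\<Sum>v\<in>V. \<Sum>r1\<in>R. \<Sum>r2\<in>R. (w r1 * indicator (B r1) v) * (w r2 * indicator (B r2) v))"
    by (rule sum.swap)
  also have "\<dots> = (\<Sum>v\<in>V. \<pi> v ^ 2)"
    unfolding \<pi>_def power2_eq_square sum_product ..
  finally have overlaps: "(\<Sum>r1\<in>R. \<Sum>r2\<in>R. w r1 * w r2 * real (card (B r1 \<inter> B r2))) = (\<Sum>v\<in>V. \<pi> v ^ 2)" .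
  have "(\<Sum>v\<in>V. \<pi> v) ^ 2 \<le> (\<Sum>v\<in>V. \<pi> v ^ 2) * real (card V)"
    using Cauchy_Schwarz_ineq_sum[of \<pi> "\<lambda>_. 1" V] by simp
  moreover have "0 \<le> (\<Sum>v\<in>V. \<pi> v ^ 2)" by (intro sum_nonneg) simp
  ultimately show ?thesis
    unfolding overlaps mass by (cases "card V = 0") (simp_all add: divide_simps)
qed

lemma card_inter_le_weakly_preferring:
  assumes el: "election V C P" and "a1 \<in> C" "a2 \<in> C" "B1 \<subseteq> V" "B2 \<subseteq> V"
  shows "card (B1 \<inter> B2)
    \<le> card {v \<in> B1. weakly_prefers P v a2 a1} + card {v \<in> B2. weakly_prefers P v a1 a2}"
proof -
  have "finite V" using el by (simp add: election_def)
  have "B1 \<inter> B2 \<subseteq> {v \<in> B1. weakly_prefers P v a2 a1} \<union> {v \<in> B2. weakly_prefers P v a1 a2}"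
    using assms weakly_prefers_total[OF el] by blast
  then have "card (B1 \<inter> B2) \<le> card ({v \<in> B1. weakly_prefers P v a2 a1} \<union> {v \<in> B2. weakly_prefers P v a1 a2})"
    by (rule card_mono[rotated]) (use assms(4,5) \<open>finite V\<close> in \<open>auto intro: finite_subset\<close>)
  also have "\<dots> \<le> card {v \<in> B1. weakly_prefers P v a2 a1} + card {v \<in> B2. weakly_prefers P v a1 a2}"
    by (rule card_Un_le)
  finally show ?thesis .
qed

lemma sum_weighted_pairs_symmetric:
  fixes w :: "'r \<Rightarrow> real" and g :: "'r \<Rightarrow> 'r \<Rightarrow> real"
  shows "(\<Sum>r1\<in>R. \<Sum>r2\<in>R. w r1 * w r2 * (g r1 r2 + g r2 r1))
    = 2 * (\<Sum>r2\<in>R. w r2 * (\<Sum>r1\<in>R. w r1 * g r1 r2))"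
proof -
  have "(\<Sum>r1\<in>R. \<Sum>r2\<in>R. w r1 * w r2 * g r2 r1) = (\<Sum>r1\<in>R. \<Sum>r2\<in>R. w r1 * w r2 * g r1 r2)"
    by (subst sum.swap) (simp add: mult.commute)
  moreover have "(\<Sum>r1\<in>R. \<Sum>r2\<in>R. w r1 * w r2 * g r1 r2) = (\<Sum>r2\<in>R. w r2 * (\<Sum>r1\<in>R. w r1 * g r1 r2))"
    by (subst sum.swap) (simp add: sum_distrib_left mult_ac)
  ultimately show ?thesis by (simp add: distrib_left sum.distrib)
qed

text \<open>The best response to a mixture w of pairs (a, B) is the candidate of a w-random pair:
  every voter in the overlap of two pairs weakly prefers one of their candidates to the other, and
  the expected overlap is at least j^2/n by Cauchy-Schwarz.\<close>
lemma election_best_response: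
  assumes el: "election V C P"
    and R_def: "R = {(a, B). a \<in> C \<and> B \<subseteq> V \<and> card B = j}"
    and w: "\<And>r. r \<in> R \<Longrightarrow> 0 \<le> w r" "sum w R = 1"
  shows "\<exists>c\<in>C. real j ^ 2 / (2 * real (card V) ^ 2) \<le>
     (\<Sum>r\<in>R. w r * (real (card {v \<in> snd r. weakly_prefers P v c (fst r)}) / real (card V)))"
proof -
  have "finite V" "finite C" using el by (auto simp: election_def)
  have "finite R"
    by (rule finite_subset[of R "C \<times> Pow V"]) (use \<open>finite V\<close> \<open>finite C\<close> in \<open>auto simp: R_def\<close>)
  define M where "M r c = real (card {v \<in> snd r. weakly_prefers P v c (fst r)})"
    for r :: "nat \<times> nat set" and c
  have "real j ^ 2 / real (card V) \<le> (\<Sum>r1\<in>R. \<Sum>r2\<in>R. w r1 * w r2 * real (card (snd r1 \<inter> snd r2)))"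
    using \<open>finite V\<close> \<open>finite R\<close> w by (intro sum_weighted_overlaps_ge) (auto simp: R_def)
  also have "\<dots> \<le> (\<Sum>r1\<in>R. \<Sum>r2\<in>R. w r1 * w r2 * (M r1 (fst r2) + M r2 (fst r1)))"
    using w(1) card_inter_le_weakly_preferring[OF el]
    by (intro sum_mono mult_left_mono) (auto simp: R_def M_def simp flip: of_nat_add)
  also have "\<dots> = 2 * (\<Sum>r2\<in>R. w r2 * (\<Sum>r1\<in>R. w r1 * M r1 (fst r2)))"
    by (rule sum_weighted_pairs_symmetric)
  finally have "real j ^ 2 / (2 * real (card V)) \<le> (\<Sum>r2\<in>R. w r2 * (\<Sum>r1\<in>R. w r1 * M r1 (fst r2)))"
    by (simp add: field_simps)
  then obtain r2 where "r2 \<in> R" and r2: "real j ^ 2 / (2 * real (card V)) \<le> (\<Sum>r1\<in>R. w r1 * M r1 (fst r2))"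
    using exists_ge_weighted_average[OF \<open>finite R\<close> w] by (meson order_trans)
  have "real j ^ 2 / (2 * real (card V) ^ 2) = real j ^ 2 / (2 * real (card V)) / real (card V)"
    by (simp add: power2_eq_square)
  also have "\<dots> \<le> (\<Sum>r1\<in>R. w r1 * M r1 (fst r2)) / real (card V)"
    using r2 by (rule divide_right_mono) simp
  also have "\<dots> = (\<Sum>r\<in>R. w r * (M r (fst r2) / real (card V)))"
    by (simp add: sum_divide_distrib)
  finally have "real j ^ 2 / (2 * real (card V) ^ 2) \<le> (\<Sum>r\<in>R. w r * (M r (fst r2) / real (card V)))" .
  moreover have "fst r2 \<in> C" using \<open>r2 \<in> R\<close> by (auto simp: R_def)
  ultimately show ?thesis by (intro bexI[of _ "fst r2"]) (simp_all only: M_def)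
qed

lemma sum_card_filter_swap:
  assumes "finite A" "finite B"
  shows "(\<Sum>a\<in>A. card {b \<in> B. Q a b}) = (\<Sum>b\<in>B. card {a \<in> A. Q a b})"
proof -
  have "(\<Sum>a\<in>A. card {b \<in> B. Q a b}) = (\<Sum>a\<in>A. \<Sum>b\<in>B. if Q a b then 1 else 0)"
    using assms(2) by (simp flip: sum.inter_filter)
  also have "\<dots> = (\<Sum>b\<in>B. \<Sum>a\<in>A. if Q a b then 1 else 0)" by (rule sum.swap)
  also have "\<dots> = (\<Sum>b\<in>B. card {a \<in> A. Q a b})"
    using assms(1) by (simp flip: sum.inter_filter)
  finally show ?thesis .
qed

text \<open>With cs read as the uniform distribution on its entries, upper_count P cs v a / length cs
  is the probability that v ranks a random entry weakly above a.\<close>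
definition upper_count :: "(nat \<Rightarrow> (nat \<times> nat) set) \<Rightarrow> nat list \<Rightarrow> nat \<Rightarrow> nat \<Rightarrow> nat" where
  "upper_count P cs v a = card {i \<in> {..<length cs}. weakly_prefers P v (cs ! i) a}"

definition well_covering ::
    "nat set \<Rightarrow> nat set \<Rightarrow> (nat \<Rightarrow> (nat \<times> nat) set) \<Rightarrow> nat \<Rightarrow> real \<Rightarrow> nat list \<Rightarrow> bool" where
  "well_covering V C P j \<epsilon> cs \<longleftrightarrow> (\<forall>a\<in>C. \<forall>B\<subseteq>V. card B = j \<longrightarrow>
     real (length cs) * real (card V) * (real j ^ 2 / (2 * real (card V) ^ 2) - \<epsilon>)
       \<le> (\<Sum>v\<in>B. real (upper_count P cs v a)))"

lemma sum_card_weakly_preferring_eq_sum_upper_count: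
  assumes "finite B"
  shows "(\<Sum>i<length cs. real (card {v \<in> B. weakly_prefers P v (cs ! i) a}))
    = (\<Sum>v\<in>B. real (upper_count P cs v a))"
  using sum_card_filter_swap[OF finite_lessThan[of "length cs"] assms,
      of "\<lambda>i v. weakly_prefers P v (cs ! i) a"]
  by (simp add: upper_count_def flip: of_nat_sum)

lemma election_minimax_list:
  assumes el: "election V C P" and "C \<noteq> {}" "j \<le> card V" "0 < \<epsilon>"
  shows "\<forall>\<^sub>F T in sequentially. \<exists>cs. length cs = T \<and> set cs \<subseteq> C \<and>
    (\<forall>a\<in>C. \<forall>B. B \<subseteq> V \<and> card B = j \<longrightarrow>
    real (length cs) * (real j ^ 2 / (2 * real (card V) ^ 2) - \<epsilon>)
      \<le> (\<Sum>i<length cs. real (card {v \<in> B. weakly_prefers P v (cs ! i) a})) / real (card V))"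
proof -
  define n where "n = card V"
  have "finite V" "V \<noteq> {}" "finite C" using el by (auto simp: election_def)
  then have "0 < real n" by (simp add: n_def card_gt_0_iff)
  define R where "R = {(a, B). a \<in> C \<and> B \<subseteq> V \<and> card B = j}"
  have "finite R"
    by (rule finite_subset[of R "C \<times> Pow V"]) (use \<open>finite V\<close> \<open>finite C\<close> in \<open>auto simp: R_def\<close>)
  obtain B0 where "B0 \<subseteq> V" "card B0 = j" using obtain_subset_with_card_n[OF \<open>j \<le> card V\<close>] by auto
  then have "R \<noteq> {}" using \<open>C \<noteq> {}\<close> by (auto simp: R_def)
  define M where "M r c = real (card {v \<in> snd r. weakly_prefers P v c (fst r)}) / real n"
    for r :: "nat \<times> nat set" and c
  have M_range: "0 \<le> M r c \<and> M r c \<le> 1" if "r \<in> R" for r c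
  proof -
    have "card {v \<in> snd r. weakly_prefers P v c (fst r)} \<le> n"
      using that \<open>finite V\<close> unfolding R_def n_def by (auto intro!: card_mono)
    then show ?thesis using \<open>0 < real n\<close> by (simp add: M_def)
  qed
  define v0 where "v0 = real j ^ 2 / (2 * real n ^ 2)"
  have "0 \<le> v0" by (simp add: v0_def)
  have "real j ^ 2 \<le> real n ^ 2" using \<open>j \<le> card V\<close> by (simp add: n_def power_mono)
  then have "real j ^ 2 \<le> 2 * real n ^ 2" using zero_le_power2[of "real n"] by linarith
  then have "v0 \<le> 1" unfolding v0_def using \<open>0 < real n\<close> by (subst divide_le_eq_1_pos) auto
  have best_response: "\<exists>c\<in>C. v0 \<le> (\<Sum>r\<in>R. w r * M r c)"
    if "\<And>r. r \<in> R \<Longrightarrow> 0 \<le> w r" "sum w R = 1" for w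
    using election_best_response[OF el R_def that] by (simp add: M_def v0_def n_def)
  have "sum_list (map (M (a, B)) cs) = (\<Sum>i<length cs. real (card {v \<in> B. weakly_prefers P v (cs ! i) a})) / real n"
    for a B cs
    by (simp add: sum_list_sum_nth atLeast0LessThan M_def sum_divide_distrib)
  then show ?thesis
    using multiplicative_weights_minimax[OF \<open>finite R\<close> \<open>R \<noteq> {}\<close> M_range best_response
        \<open>0 \<le> v0\<close> \<open>v0 \<le> 1\<close> \<open>0 < \<epsilon>\<close>]
    by (simp add: R_def v0_def n_def)
qed

lemma exists_well_covering_lists:
  assumes el: "election V C P" and "C \<noteq> {}" "j \<le> card V" "0 < \<epsilon>"
  shows "\<forall>\<^sub>F T in sequentially. \<exists>cs. length cs = T \<and> set cs \<subseteq> C \<and> well_covering V C P j \<epsilon> cs"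
proof -
  have "finite V" "V \<noteq> {}" using el by (auto simp: election_def)
  then have "0 < real (card V)" by (simp add: card_gt_0_iff)
  have covering: "well_covering V C P j \<epsilon> cs"
    if cs: "\<forall>a\<in>C. \<forall>B. B \<subseteq> V \<and> card B = j \<longrightarrow> real (length cs) * (real j ^ 2 / (2 * real (card V) ^ 2) - \<epsilon>)
      \<le> (\<Sum>i<length cs. real (card {v \<in> B. weakly_prefers P v (cs ! i) a})) / real (card V)" for cs
    unfolding well_covering_def
  proof (intro ballI allI impI)
    fix a B assume "a \<in> C" "B \<subseteq> V" "card B = j"
    then have "real (length cs) * (real j ^ 2 / (2 * real (card V) ^ 2) - \<epsilon>)
        \<le> (\<Sum>i<length cs. real (card {v \<in> B. weakly_prefers P v (cs ! i) a})) / real (card V)"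
      using cs by blast
    also have "\<dots> = (\<Sum>v\<in>B. real (upper_count P cs v a)) / real (card V)"
      using \<open>B \<subseteq> V\<close> \<open>finite V\<close>
      by (simp only: sum_card_weakly_preferring_eq_sum_upper_count[OF finite_subset])
    finally show "real (length cs) * real (card V) * (real j ^ 2 / (2 * real (card V) ^ 2) - \<epsilon>)
        \<le> (\<Sum>v\<in>B. real (upper_count P cs v a))"
      using \<open>0 < real (card V)\<close> by (simp add: field_simps)
  qed
  from election_minimax_list[OF assms] show ?thesis
    by (rule eventually_mono) (use covering in blast)
qed

lemma obtain_well_covering_list:
  assumes "election V C P" "C \<noteq> {}" "j \<le> card V" "0 < \<epsilon>" "0 \<le> \<tau>" "\<tau> \<le> 1" "0 < \<delta>"
  obtains cs s0 where "set cs \<subseteq> C" "well_covering V C P j \<epsilon> cs" "0 < length cs"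
    "s0 \<le> length cs" "\<tau> \<le> real s0 / real (length cs)" "real s0 / real (length cs) \<le> \<tau> + \<delta>"
proof -
  obtain T0 where T0: "\<forall>T\<ge>T0. \<exists>cs. length cs = T \<and> set cs \<subseteq> C \<and> well_covering V C P j \<epsilon> cs"
    using exists_well_covering_lists[OF assms(1-4)] unfolding eventually_sequentially by blast
  define T where "T = max T0 (nat \<lceil>1 / \<delta>\<rceil> + 1)"
  obtain cs where cs: "length cs = T" "set cs \<subseteq> C" "well_covering V C P j \<epsilon> cs"
    using T0 max.cobounded1[of T0] unfolding T_def by blast
  have "0 < T" by (simp add: T_def)
  have "1 / \<delta> \<le> real T" unfolding T_def by linarith
  then have "1 / real T \<le> \<delta>" using \<open>0 < \<delta>\<close> \<open>0 < T\<close> by (simp add: divide_simps mult.commute)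
  define s0 where "s0 = nat \<lceil>\<tau> * real T\<rceil>"
  have "\<tau> * real T \<le> real s0" "real s0 < \<tau> * real T + 1"
    using \<open>0 \<le> \<tau>\<close> by (simp_all add: s0_def) linarith
  have "\<tau> * real T \<le> real T" using mult_right_mono[OF \<open>\<tau> \<le> 1\<close>, of "real T"] by simp
  then have "s0 \<le> T" by (simp add: s0_def)
  have "\<tau> \<le> real s0 / real T" using \<open>\<tau> * real T \<le> real s0\<close> \<open>0 < T\<close> by (simp add: divide_simps)
  moreover have "real s0 / real T < \<tau> + 1 / real T"
    using \<open>real s0 < \<tau> * real T + 1\<close> \<open>0 < T\<close> by (simp add: divide_simps)
  ultimately show ?thesis
    using that[of cs s0] cs \<open>0 < T\<close> \<open>s0 \<le> T\<close> \<open>1 / real T \<le> \<delta>\<close> by auto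
qed

section \<open>Sampling entries of the list\<close>

definition rank_above :: "(nat \<Rightarrow> (nat \<times> nat) set) \<Rightarrow> nat list \<Rightarrow> nat \<Rightarrow> nat \<Rightarrow> nat" where
  "rank_above P cs v i = card {i' \<in> {..<length cs}. (cs ! i', cs ! i) \<in> P v}"

text \<open>A sample of d entries of cs, drawn uniformly with replacement, is a function in
  \<^term>\<open>{..<d} \<rightarrow>\<^sub>E {..<length cs}\<close>.\<close>
definition best_rank :: "(nat \<Rightarrow> (nat \<times> nat) set) \<Rightarrow> nat list \<Rightarrow> nat \<Rightarrow> nat \<Rightarrow> (nat \<Rightarrow> nat) \<Rightarrow> nat" where
  "best_rank P cs d v f = Min ((\<lambda>l. rank_above P cs v (f l)) ` {..<d})"

lemma rank_above_le_length: "rank_above P cs v i \<le> length cs"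
  unfolding rank_above_def by (rule order_trans[OF card_mono[of "{..<length cs}"]]) auto

lemma best_rank_le_length: "1 \<le> d \<Longrightarrow> best_rank P cs d v f \<le> length cs"
  unfolding best_rank_def
  by (rule order_trans[OF Min_le rank_above_le_length[of P cs v "f 0"]]) auto

lemma card_rank_above_ge:
  assumes "trans (P v)" "irrefl (P v)"
  shows "card {i \<in> {..<length cs}. s \<le> rank_above P cs v i} \<le> length cs - s"
proof (cases "{i \<in> {..<length cs}. s \<le> rank_above P cs v i} = {}")
  case True
  show ?thesis unfolding True by simp
next
  case False
  define X where "X = {i \<in> {..<length cs}. s \<le> rank_above P cs v i}"
  obtain i0 where i0: "i0 \<in> X" "\<And>i. i \<in> X \<Longrightarrow> rank_above P cs v i0 \<le> rank_above P cs v i"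
    using False ex_has_least_nat[of "\<lambda>i. i \<in> X" _ "rank_above P cs v"] unfolding X_def by blast
  define U where "U = {i' \<in> {..<length cs}. (cs ! i', cs ! i0) \<in> P v}"
  \<comment> \<open>The entries above a rank-minimal element of X have smaller rank, so they lie outside X.\<close>
  have "X \<inter> U = {}"
  proof (rule ccontr)
    assume "X \<inter> U \<noteq> {}"
    then obtain i where "i \<in> X" "i \<in> U" by auto
    have "{i' \<in> {..<length cs}. (cs ! i', cs ! i) \<in> P v} \<subset> U"
      using \<open>i \<in> U\<close> assms unfolding U_def irrefl_def by (auto elim: transE)
    then have "rank_above P cs v i < rank_above P cs v i0"
      unfolding rank_above_def U_def by (intro psubset_card_mono) auto
    with i0(2)[OF \<open>i \<in> X\<close>] show False by simp
  qed
  then have "card X \<le> card ({..<length cs} - U)"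
    by (intro card_mono) (auto simp: X_def)
  also have "\<dots> = length cs - card U"
    by (subst card_Diff_subset) (auto simp: U_def)
  also have "\<dots> \<le> length cs - s"
    using i0(1) unfolding X_def U_def rank_above_def by (intro diff_le_mono2) simp
  finally show ?thesis unfolding X_def .
qed

lemma best_rank_ge_iff:
  "1 \<le> d \<Longrightarrow> s \<le> best_rank P cs d v f \<longleftrightarrow> (\<forall>l<d. s \<le> rank_above P cs v (f l))"
  unfolding best_rank_def by (subst Min_ge_iff) (auto simp: lessThan_empty_iff)

lemma card_best_rank_ge:
  assumes "trans (P v)" "irrefl (P v)" "1 \<le> d"
  shows "card {f \<in> {..<d} \<rightarrow>\<^sub>E {..<length cs}. s \<le> best_rank P cs d v f} \<le> (length cs - s) ^ d"
proof -
  have "{f \<in> {..<d} \<rightarrow>\<^sub>E {..<length cs}. s \<le> best_rank P cs d v f}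
      = {..<d} \<rightarrow>\<^sub>E {i \<in> {..<length cs}. s \<le> rank_above P cs v i}"
    using best_rank_ge_iff[OF \<open>1 \<le> d\<close>] by (auto simp: PiE_iff extensional_def)
  then have "card {f \<in> {..<d} \<rightarrow>\<^sub>E {..<length cs}. s \<le> best_rank P cs d v f}
      = card {i \<in> {..<length cs}. s \<le> rank_above P cs v i} ^ d"
    by (simp add: card_PiE)
  then show ?thesis
    using card_rank_above_ge[where P = P and v = v, OF assms(1,2), of cs s] by (simp add: power_mono)
qed

lemma upper_count_le_best_rank:
  assumes "trans (P v)" "1 \<le> d" "\<forall>l<d. (a, cs ! f l) \<in> P v"
  shows "upper_count P cs v a \<le> best_rank P cs d v f"
  unfolding best_rank_ge_iff[OF \<open>1 \<le> d\<close>]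
proof safe
  fix l assume "l < d"
  have "{i \<in> {..<length cs}. weakly_prefers P v (cs ! i) a}
      \<subseteq> {i' \<in> {..<length cs}. (cs ! i', cs ! f l) \<in> P v}"
    using assms(1,3) \<open>l < d\<close> weakly_prefers_strict_trans by blast
  then show "upper_count P cs v a \<le> rank_above P cs v (f l)"
    unfolding upper_count_def rank_above_def by (intro card_mono) auto
qed

lemma exists_le_average:
  fixes g :: "'a \<Rightarrow> real"
  assumes "finite F" "F \<noteq> {}"
  shows "\<exists>f\<in>F. g f * real (card F) \<le> sum g F"
proof -
  have "Min (g ` F) \<in> g ` F" using assms by (intro Min_in) auto
  then obtain f where "f \<in> F" "g f = Min (g ` F)" by auto
  then have "(\<Sum>x\<in>F. g f) \<le> sum g F" using assms(1) by (intro sum_mono) auto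
  then show ?thesis using \<open>f \<in> F\<close> by (auto simp: mult.commute)
qed

lemma binomial_leading_terms_le:
  fixes m :: real
  assumes "0 \<le> m"
  shows "m ^ Suc k + real (Suc k) * m ^ k \<le> (m + 1) ^ Suc k"
proof (induction k)
  case 0
  show ?case by simp
next
  case (Suc k)
  have "(m + 1) * (m ^ Suc k + real (Suc k) * m ^ k)
      = m ^ Suc (Suc k) + real (Suc (Suc k)) * m ^ Suc k + real (Suc k) * m ^ k"
    by (simp add: algebra_simps)
  then have "m ^ Suc (Suc k) + real (Suc (Suc k)) * m ^ Suc k \<le> (m + 1) * (m ^ Suc k + real (Suc k) * m ^ k)"
    using assms by simp
  also have "\<dots> \<le> (m + 1) * (m + 1) ^ Suc k"
    using Suc assms by (intro mult_left_mono) auto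
  finally show ?case by simp
qed

lemma sum_powers_le: "(\<Sum>i<m. real i ^ k) \<le> real m ^ Suc k / real (Suc k)"
proof (induction m)
  case 0
  show ?case by simp
next
  case (Suc m)
  have "(\<Sum>i<Suc m. real i ^ k) \<le> real m ^ Suc k / real (Suc k) + real m ^ k"
    using Suc by simp
  also have "\<dots> = (real m ^ Suc k + real (Suc k) * real m ^ k) / real (Suc k)"
    by (simp add: add_divide_distrib)
  also have "\<dots> \<le> (real m + 1) ^ Suc k / real (Suc k)"
    using binomial_leading_terms_le[of "real m" k] by (intro divide_right_mono) auto
  finally show ?case by (simp add: add.commute)
qed

lemma samples_finite_nonempty:
  assumes "0 < T"
  shows "finite ({..<d} \<rightarrow>\<^sub>E {..<T})" "{..<d} \<rightarrow>\<^sub>E {..<T} \<noteq> {}" "card ({..<d} \<rightarrow>\<^sub>E {..<T}) = T ^ d"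
  using assms by (auto simp: finite_PiE card_PiE PiE_eq_empty_iff)

lemma exists_sample_few_above:
  assumes el: "election V C P" and "0 < length cs" "s0 \<le> length cs" "1 \<le> d"
  shows "\<exists>f\<in>{..<d} \<rightarrow>\<^sub>E {..<length cs}.
    real (card {v \<in> V. s0 \<le> best_rank P cs d v f}) \<le> real (card V) * (1 - real s0 / real (length cs)) ^ d"
proof -
  define T where "T = length cs"
  define F where "F = {..<d} \<rightarrow>\<^sub>E {..<T}"
  have "finite V" using el by (simp add: election_def)
  have F: "finite F" "F \<noteq> {}" "card F = T ^ d"
    using samples_finite_nonempty \<open>0 < length cs\<close> by (simp_all add: F_def T_def)
  have "(\<Sum>f\<in>F. real (card {v \<in> V. s0 \<le> best_rank P cs d v f}))
      = (\<Sum>v\<in>V. real (card {f \<in> F. s0 \<le> best_rank P cs d v f}))"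
    using sum_card_filter_swap[OF F(1) \<open>finite V\<close>, of "\<lambda>f v. s0 \<le> best_rank P cs d v f"]
    by (simp flip: of_nat_sum)
  also have "\<dots> \<le> (\<Sum>v\<in>V. real (T - s0) ^ d)"
    using card_best_rank_ge[where P = P, OF election_voter_order(1,2)[OF el] \<open>1 \<le> d\<close>]
    by (intro sum_mono) (simp add: F_def T_def flip: of_nat_power)
  finally obtain f where f: "f \<in> F"
    "real (card {v \<in> V. s0 \<le> best_rank P cs d v f}) * real T ^ d \<le> real (card V) * real (T - s0) ^ d"
    using exists_le_average[OF F(1,2)] F(3) by (force intro: order_trans)
  have "real (T - s0) = real T * (1 - real s0 / real T)"
    using \<open>0 < length cs\<close> \<open>s0 \<le> length cs\<close> by (simp add: T_def of_nat_diff field_simps)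
  then have eq: "real (card V) * real (T - s0) ^ d = real T ^ d * (real (card V) * (1 - real s0 / real T) ^ d)"
    by (simp add: power_mult_distrib mult_ac)
  have pos: "0 < real T ^ d" using \<open>0 < length cs\<close> by (simp add: T_def)
  from f(2) have "real T ^ d * real (card {v \<in> V. s0 \<le> best_rank P cs d v f})
      \<le> real T ^ d * (real (card V) * (1 - real s0 / real T) ^ d)"
    unfolding eq[symmetric] by (simp add: mult.commute)
  then show ?thesis using f(1) pos unfolding F_def T_def by (subst (asm) mult_le_cancel_left_pos) auto
qed

lemma sum_best_rank_excess_le:
  assumes "trans (P v)" "irrefl (P v)" "1 \<le> k" "s0 \<le> length cs"
  shows "(\<Sum>f\<in>{..<k} \<rightarrow>\<^sub>E {..<length cs}. real (best_rank P cs k v f - s0))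
    \<le> real (length cs - s0) ^ Suc k / real (Suc k)"
proof -
  define T where "T = length cs"
  define F where "F = {..<k} \<rightarrow>\<^sub>E {..<T}"
  define m where "m = T - s0"
  have "finite F" by (simp add: F_def finite_PiE)
  \<comment> \<open>Layer-cake decomposition of the excess over the levels s0 + i.\<close>
  have layers: "best_rank P cs k v f - s0 = card {i \<in> {..<m}. Suc (s0 + i) \<le> best_rank P cs k v f}" for f
  proof -
    have "{i \<in> {..<m}. Suc (s0 + i) \<le> best_rank P cs k v f} = {..<best_rank P cs k v f - s0}"
      using best_rank_le_length[OF \<open>1 \<le> k\<close>, of P cs v f] by (auto simp: m_def T_def)
    then show ?thesis by simp
  qed
  have "(\<Sum>f\<in>F. best_rank P cs k v f - s0) = (\<Sum>i<m. card {f \<in> F. Suc (s0 + i) \<le> best_rank P cs k v f})"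
    unfolding layers by (rule sum_card_filter_swap[OF \<open>finite F\<close> finite_lessThan])
  also have "\<dots> \<le> (\<Sum>i<m. (m - Suc i) ^ k)"
    using card_best_rank_ge[where P = P and v = v, OF assms(1-3)]
    by (intro sum_mono) (simp add: F_def m_def T_def)
  also have "\<dots> = (\<Sum>i<m. i ^ k)"
    by (rule sum.nat_diff_reindex)
  finally have "(\<Sum>f\<in>F. real (best_rank P cs k v f - s0)) \<le> (\<Sum>i<m. real i ^ k)"
    by (simp flip: of_nat_sum of_nat_power)
  also have "\<dots> \<le> real m ^ Suc k / real (Suc k)"
    by (rule sum_powers_le)
  finally show ?thesis by (simp add: F_def m_def T_def)
qed

lemma exists_sample_small_excess:
  assumes el: "election V C P" and "0 < length cs" "s0 \<le> length cs" "1 \<le> k"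
  shows "\<exists>f\<in>{..<k} \<rightarrow>\<^sub>E {..<length cs}. (\<Sum>v\<in>V. real (best_rank P cs k v f - s0))
    \<le> real (card V) * real (length cs) * (1 - real s0 / real (length cs)) ^ Suc k / real (Suc k)"
proof -
  define T where "T = length cs"
  define F where "F = {..<k} \<rightarrow>\<^sub>E {..<T}"
  have "finite V" using el by (simp add: election_def)
  have F: "finite F" "F \<noteq> {}" "card F = T ^ k"
    using samples_finite_nonempty \<open>0 < length cs\<close> by (simp_all add: F_def T_def)
  have "(\<Sum>f\<in>F. \<Sum>v\<in>V. real (best_rank P cs k v f - s0))
      = (\<Sum>v\<in>V. \<Sum>f\<in>F. real (best_rank P cs k v f - s0))"
    by (rule sum.swap)
  also have "\<dots> \<le> (\<Sum>v\<in>V. real (T - s0) ^ Suc k / real (Suc k))"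
    using sum_best_rank_excess_le[where P = P, OF election_voter_order(1,2)[OF el] \<open>1 \<le> k\<close> \<open>s0 \<le> length cs\<close>]
    by (intro sum_mono) (simp add: F_def T_def)
  finally obtain f where f: "f \<in> F"
    "(\<Sum>v\<in>V. real (best_rank P cs k v f - s0)) * real T ^ k \<le> real (card V) * (real (T - s0) ^ Suc k / real (Suc k))"
    using exists_le_average[OF F(1,2)] F(3) by (force intro: order_trans)
  have "real (T - s0) = real T * (1 - real s0 / real T)"
    using \<open>0 < length cs\<close> \<open>s0 \<le> length cs\<close> by (simp add: T_def of_nat_diff field_simps)
  then have eq: "real (card V) * (real (T - s0) ^ Suc k / real (Suc k))
      = real T ^ k * (real (card V) * real T * (1 - real s0 / real T) ^ Suc k / real (Suc k))"
    by (simp add: power_mult_distrib mult_ac)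
  have pos: "0 < real T ^ k" using \<open>0 < length cs\<close> by (simp add: T_def)
  from f(2) have "real T ^ k * (\<Sum>v\<in>V. real (best_rank P cs k v f - s0))
      \<le> real T ^ k * (real (card V) * real T * (1 - real s0 / real T) ^ Suc k / real (Suc k))"
    unfolding eq[symmetric] by (simp add: mult.commute)
  then show ?thesis using f(1) pos unfolding F_def T_def by (subst (asm) mult_le_cancel_left_pos) auto
qed

section \<open>Undominated committees\<close>

lemma real_less_of_less_nat_ceiling: "m < nat \<lceil>x\<rceil> \<Longrightarrow> real m < x"
  by linarith

lemma sum_upper_count_le_excess:
  assumes "finite Y" "B \<subseteq> Y" "1 \<le> d" "\<And>v. v \<in> B \<Longrightarrow> trans (P v)"
    and "\<forall>v\<in>B. \<forall>b\<in>(\<lambda>l. cs ! f l) ` {..<d}. (a, b) \<in> P v"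
  shows "(\<Sum>v\<in>B. real (upper_count P cs v a))
    \<le> real (card B) * real s + (\<Sum>v\<in>Y. real (best_rank P cs d v f - s))"
proof -
  have "(\<Sum>v\<in>B. real (upper_count P cs v a)) \<le> (\<Sum>v\<in>B. real s + real (best_rank P cs d v f - s))"
  proof (intro sum_mono)
    fix v assume "v \<in> B"
    then have "upper_count P cs v a \<le> best_rank P cs d v f"
      using assms(4,5) by (intro upper_count_le_best_rank[OF _ \<open>1 \<le> d\<close>]) auto
    then show "real (upper_count P cs v a) \<le> real s + real (best_rank P cs d v f - s)" by linarith
  qed
  also have "\<dots> = real (card B) * real s + (\<Sum>v\<in>B. real (best_rank P cs d v f - s))"
    by (simp add: sum.distrib)
  also have "\<dots> \<le> real (card B) * real s + (\<Sum>v\<in>Y. real (best_rank P cs d v f - s))"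
    using assms(1,2) by (intro add_left_mono sum_mono2) auto
  finally show ?thesis .
qed

lemma card_voters_preferring_to_sample_lt:
  assumes el: "election V C P" and cov: "well_covering V C P j \<epsilon> cs"
    and "0 < length cs" "1 \<le> d" "a \<in> C" "Y \<subseteq> V"
    and gap: "real j / real (card V) * (real s / real (length cs))
        + (\<Sum>v\<in>Y. real (best_rank P cs d v f - s)) / (real (length cs) * real (card V))
      < (real j / real (card V)) ^ 2 / 2 - \<epsilon>"
  shows "card {v \<in> Y. \<forall>b\<in>(\<lambda>l. cs ! f l) ` {..<d}. (a, b) \<in> P v} < j"
proof (rule ccontr)
  define n where "n = card V"
  define T where "T = length cs"
  define E where "E = (\<Sum>v\<in>Y. real (best_rank P cs d v f - s))"
  have "finite V" "V \<noteq> {}" using el by (auto simp: election_def)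
  then have "0 < real n" by (simp add: n_def card_gt_0_iff)
  have "0 < real T" using \<open>0 < length cs\<close> by (simp add: T_def)
  assume "\<not> card {v \<in> Y. \<forall>b\<in>(\<lambda>l. cs ! f l) ` {..<d}. (a, b) \<in> P v} < j"
  then obtain B where B: "B \<subseteq> {v \<in> Y. \<forall>b\<in>(\<lambda>l. cs ! f l) ` {..<d}. (a, b) \<in> P v}" "card B = j"
    by (meson not_less obtain_subset_with_card_n)
  then have "B \<subseteq> V" using \<open>Y \<subseteq> V\<close> by auto
  have "real T * real n * (real j ^ 2 / (2 * real n ^ 2) - \<epsilon>) \<le> (\<Sum>v\<in>B. real (upper_count P cs v a))"
    using cov \<open>a \<in> C\<close> \<open>B \<subseteq> V\<close> B(2) by (simp add: well_covering_def T_def n_def)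
  also have "\<dots> \<le> real j * real s + E"
    unfolding E_def B(2)[symmetric]
    using B(1) \<open>Y \<subseteq> V\<close> \<open>finite V\<close> election_voter_order(1)[OF el] \<open>1 \<le> d\<close>
    by (intro sum_upper_count_le_excess) (auto intro: finite_subset)
  finally have "real T * real n * (real j ^ 2 / (2 * real n ^ 2) - \<epsilon>) / (real T * real n)
      \<le> (real j * real s + E) / (real T * real n)"
    using \<open>0 < real n\<close> \<open>0 < real T\<close> by (intro divide_right_mono) auto
  moreover have "real T * real n * (real j ^ 2 / (2 * real n ^ 2) - \<epsilon>) / (real T * real n)
      = (real j / real n) ^ 2 / 2 - \<epsilon>"
    using \<open>0 < real n\<close> \<open>0 < real T\<close> by (simp add: power_divide)
  moreover have "(real j * real s + E) / (real T * real n) = real j / real n * (real s / real T) + E / (real T * real n)"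
    by (simp add: add_divide_distrib mult.commute)
  ultimately show False using gap by (simp add: n_def T_def E_def)
qed

lemma power_one_minus_le_exp:
  fixes \<sigma> \<tau> :: real
  assumes "0 \<le> \<tau>" "\<tau> \<le> \<sigma>" "\<sigma> \<le> 1"
  shows "(1 - \<sigma>) ^ d \<le> exp (- real d * \<tau>)"
proof -
  have "1 - \<sigma> \<le> exp (- \<tau>)" "0 \<le> 1 - \<sigma>"
    using assms exp_ge_add_one_self[of "- \<tau>"] by argo+
  then have "(1 - \<sigma>) ^ d \<le> exp (- \<tau>) ^ d" by (rule power_mono)
  also have "\<dots> = exp (- real d * \<tau>)" by (simp add: exp_of_nat_mult[symmetric])
  finally show ?thesis .
qed

lemma direct_bound_gap:
  fixes \<alpha> \<beta> \<sigma> \<tau> \<delta> :: real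
  assumes "0 < \<alpha>" "(1 - \<sigma>) ^ Suc k \<le> \<alpha>"
    and \<delta>: "\<delta> = \<alpha> / 2 - \<tau> - 1 / (real k + 1)" "0 < \<delta>"
    and "\<alpha> \<le> \<beta>" "\<sigma> \<le> \<tau> + \<delta> / 2"
  shows "\<beta> * \<sigma> + (1 - \<sigma>) ^ Suc k / real (Suc k) < \<beta> ^ 2 / 2 - \<alpha> * \<delta> / 4"
proof -
  from divide_right_mono[OF assms(2), of "real (Suc k)"]
  have "(1 - \<sigma>) ^ Suc k / real (Suc k) \<le> \<alpha> / (real k + 1)" by (simp add: add.commute)
  have margin: "1 / (real k + 1) + \<delta> / 2 \<le> \<alpha> / 2 - \<sigma>" using assms by linarith
  \<comment> \<open>\<open>\<beta> (\<beta>/2 - \<sigma>)\<close> grows with \<open>\<beta>\<close> on \<open>\<beta> \<ge> \<alpha>\<close>, because \<open>\<alpha>/2 > \<sigma>\<close>.\<close>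
  have "0 < 1 / (real k + 1)" by simp
  then have "0 \<le> (\<beta> + \<alpha>) / 2 - \<sigma>" using margin \<open>\<alpha> \<le> \<beta>\<close> \<open>0 < \<delta>\<close> \<open>0 < \<alpha>\<close> by argo
  then have "0 \<le> (\<beta> - \<alpha>) * ((\<beta> + \<alpha>) / 2 - \<sigma>)"
    using \<open>\<alpha> \<le> \<beta>\<close> by (intro mult_nonneg_nonneg) auto
  moreover have "\<beta> * (\<beta> / 2 - \<sigma>) - \<alpha> * (\<alpha> / 2 - \<sigma>) = (\<beta> - \<alpha>) * ((\<beta> + \<alpha>) / 2 - \<sigma>)"
    by (simp add: field_simps)
  ultimately have "\<alpha> * (\<alpha> / 2 - \<sigma>) \<le> \<beta> * (\<beta> / 2 - \<sigma>)" by linarith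
  moreover have "\<alpha> * (1 / (real k + 1) + \<delta> / 2) \<le> \<alpha> * (\<alpha> / 2 - \<sigma>)"
    using margin \<open>0 < \<alpha>\<close> by (intro mult_left_mono) auto
  moreover have "\<alpha> * (1 / (real k + 1) + \<delta> / 2) = \<alpha> / (real k + 1) + \<alpha> * \<delta> / 2"
    by (simp add: algebra_simps)
  moreover have "\<alpha> * \<delta> / 4 < \<alpha> * \<delta> / 2" using \<open>0 < \<alpha>\<close> \<open>0 < \<delta>\<close> by simp
  moreover have "\<beta> * (\<beta> / 2 - \<sigma>) = \<beta> ^ 2 / 2 - \<beta> * \<sigma>"
    by (simp add: power2_eq_square algebra_simps)
  ultimately show ?thesis
    using \<open>(1 - \<sigma>) ^ Suc k / real (Suc k) \<le> \<alpha> / (real k + 1)\<close> by linarith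
qed

lemma direct_threshold:
  fixes \<alpha> :: real
  assumes "0 < \<alpha>" "\<alpha> < 1" "2 / (real k + 1) * (1 - ln \<alpha>) < \<alpha>"
  obtains \<tau> \<delta> where "0 \<le> \<tau>" "\<tau> \<le> 1" "0 < \<delta>"
    "\<And>\<beta> \<sigma>. \<alpha> \<le> \<beta> \<Longrightarrow> \<tau> \<le> \<sigma> \<Longrightarrow> \<sigma> \<le> \<tau> + \<delta> \<Longrightarrow> \<sigma> \<le> 1 \<Longrightarrow>
      \<beta> * \<sigma> + (1 - \<sigma>) ^ Suc k / real (Suc k) < \<beta> ^ 2 / 2 - \<alpha> * \<delta> / 2"
proof -
  define \<tau> where "\<tau> = - ln \<alpha> / (real k + 1)"
  have "0 \<le> \<tau>" using \<open>0 < \<alpha>\<close> \<open>\<alpha> < 1\<close> by (simp add: \<tau>_def divide_nonpos_pos)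
  have "- real (Suc k) * \<tau> = ln \<alpha>" by (simp add: \<tau>_def field_simps)
  then have "exp (- real (Suc k) * \<tau>) = \<alpha>" using \<open>0 < \<alpha>\<close> by simp
  define \<delta> where "\<delta> = \<alpha> / 2 - \<tau> - 1 / (real k + 1)"
  have "2 / K * (1 - L) = 2 * (1 / K) + 2 * (- L / K)" if "K \<noteq> 0" for K L :: real
    using that by (simp add: field_simps)
  then have "2 / (real k + 1) * (1 - ln \<alpha>) = 2 * (1 / (real k + 1)) + 2 * \<tau>"
    unfolding \<tau>_def by simp
  then have "0 < \<delta>" using assms(3) by (simp add: \<delta>_def)
  have "0 < 1 / (real k + 1)" by simp
  then have "\<tau> \<le> 1" using \<open>0 < \<delta>\<close> \<open>\<alpha> < 1\<close> unfolding \<delta>_def by linarith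
  show ?thesis
  proof (rule that[of \<tau> "\<delta> / 2"])
    fix \<beta> \<sigma> assume "\<alpha> \<le> \<beta>" "\<tau> \<le> \<sigma>" "\<sigma> \<le> \<tau> + \<delta> / 2" "\<sigma> \<le> 1"
    have "(1 - \<sigma>) ^ Suc k \<le> \<alpha>"
      using power_one_minus_le_exp[OF \<open>0 \<le> \<tau>\<close> \<open>\<tau> \<le> \<sigma>\<close> \<open>\<sigma> \<le> 1\<close>, of "Suc k"]
        \<open>exp (- real (Suc k) * \<tau>) = \<alpha>\<close> by simp
    from direct_bound_gap[OF \<open>0 < \<alpha>\<close> this \<delta>_def \<open>0 < \<delta>\<close> \<open>\<alpha> \<le> \<beta>\<close> \<open>\<sigma> \<le> \<tau> + \<delta> / 2\<close>]
    show "\<beta> * \<sigma> + (1 - \<sigma>) ^ Suc k / real (Suc k) < \<beta> ^ 2 / 2 - \<alpha> * (\<delta> / 2) / 2" by simp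
  qed (use \<open>0 \<le> \<tau>\<close> \<open>\<tau> \<le> 1\<close> \<open>0 < \<delta>\<close> in auto)
qed

lemma card_sample_committee:
  assumes "set cs \<subseteq> C" "f \<in> {..<d} \<rightarrow>\<^sub>E {..<length cs}"
  shows "(\<lambda>l. cs ! f l) ` {..<d} \<subseteq> C" "card ((\<lambda>l. cs ! f l) ` {..<d}) \<le> d"
  using assms card_image_le[of "{..<d}" "\<lambda>l. cs ! f l"] by (auto simp: PiE_iff)

lemma dom_frac_lt:
  assumes "finite V" "V \<noteq> {}" "real (card {v \<in> V. \<forall>b\<in>S. (a, b) \<in> P v}) < \<alpha> * real (card V)"
  shows "dom_frac V P a S < \<alpha>"
  using assms by (simp add: dom_frac_def card_gt_0_iff divide_less_eq)

lemma obtain_sample_rarely_dominated: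
  assumes el: "election V C P" and "C \<noteq> {}" "1 \<le> k" "0 < \<alpha>" "\<alpha> < 1"
    and "2 / (real k + 1) * (1 - ln \<alpha>) < \<alpha>"
  obtains U where "U \<subseteq> C" "card U \<le> k"
    "\<And>a. a \<in> C \<Longrightarrow> real (card {v \<in> V. \<forall>b\<in>U. (a, b) \<in> P v}) < \<alpha> * real (card V)"
proof -
  define n where "n = card V"
  have "finite V" "V \<noteq> {}" using el by (auto simp: election_def)
  then have "0 < real n" by (simp add: n_def card_gt_0_iff)
  obtain \<tau> \<delta> where "0 \<le> \<tau>" "\<tau> \<le> 1" "0 < \<delta>" and gap: "\<And>\<beta> \<sigma>. \<alpha> \<le> \<beta> \<Longrightarrow> \<tau> \<le> \<sigma> \<Longrightarrow>
      \<sigma> \<le> \<tau> + \<delta> \<Longrightarrow> \<sigma> \<le> 1 \<Longrightarrow> \<beta> * \<sigma> + (1 - \<sigma>) ^ Suc k / real (Suc k) < \<beta> ^ 2 / 2 - \<alpha> * \<delta> / 2"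
    using direct_threshold[OF assms(4-6)] by blast
  define \<epsilon> where "\<epsilon> = \<alpha> * \<delta> / 2"
  have "0 < \<epsilon>" using \<open>0 < \<alpha>\<close> \<open>0 < \<delta>\<close> by (simp add: \<epsilon>_def)
  define j where "j = nat \<lceil>\<alpha> * real n\<rceil>"
  have "j \<le> card V" using \<open>\<alpha> < 1\<close> \<open>0 < real n\<close> by (simp add: j_def n_def nat_le_iff ceiling_le_iff)
  have "\<alpha> * real n \<le> real j" unfolding j_def by (rule real_nat_ceiling_ge)
  then have "\<alpha> \<le> real j / real n" using \<open>0 < real n\<close> by (simp add: le_divide_eq)
  obtain cs s0 where cs: "set cs \<subseteq> C" "well_covering V C P j \<epsilon> cs" "0 < length cs" "s0 \<le> length cs"
      and \<sigma>: "\<tau> \<le> real s0 / real (length cs)" "real s0 / real (length cs) \<le> \<tau> + \<delta>"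
    using obtain_well_covering_list[OF el \<open>C \<noteq> {}\<close> \<open>j \<le> card V\<close> \<open>0 < \<epsilon>\<close> \<open>0 \<le> \<tau>\<close> \<open>\<tau> \<le> 1\<close> \<open>0 < \<delta>\<close>]
    by blast
  define \<sigma> where "\<sigma> = real s0 / real (length cs)"
  have "\<sigma> \<le> 1" using cs(3,4) by (simp add: \<sigma>_def)
  obtain f where f: "f \<in> {..<k} \<rightarrow>\<^sub>E {..<length cs}"
    and excess: "(\<Sum>v\<in>V. real (best_rank P cs k v f - s0))
      \<le> real n * real (length cs) * (1 - \<sigma>) ^ Suc k / real (Suc k)"
    using exists_sample_small_excess[OF el cs(3,4) \<open>1 \<le> k\<close>] by (auto simp: n_def \<sigma>_def)
  show ?thesis
  proof (rule that[OF card_sample_committee[OF cs(1) f]])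
    fix a assume "a \<in> C"
    have "(\<Sum>v\<in>V. real (best_rank P cs k v f - s0)) / (real (length cs) * real n)
        \<le> (1 - \<sigma>) ^ Suc k / real (Suc k)"
      using excess \<open>0 < real n\<close> cs(3) by (simp add: divide_le_eq mult_ac)
    moreover have "real j / real n * \<sigma> + (1 - \<sigma>) ^ Suc k / real (Suc k) < (real j / real n) ^ 2 / 2 - \<epsilon>"
      unfolding \<epsilon>_def using gap \<open>\<alpha> \<le> real j / real n\<close> \<sigma>[folded \<sigma>_def] \<open>\<sigma> \<le> 1\<close> by blast
    ultimately have "real j / real n * \<sigma> + (\<Sum>v\<in>V. real (best_rank P cs k v f - s0)) / (real (length cs) * real n)
        < (real j / real n) ^ 2 / 2 - \<epsilon>" by linarith
    then have "card {v \<in> V. \<forall>b\<in>(\<lambda>l. cs ! f l) ` {..<k}. (a, b) \<in> P v} < j"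
      unfolding n_def \<sigma>_def
      by (rule card_voters_preferring_to_sample_lt[OF el cs(2,3) \<open>1 \<le> k\<close> \<open>a \<in> C\<close> subset_refl])
    then show "real (card {v \<in> V. \<forall>b\<in>(\<lambda>l. cs ! f l) ` {..<k}. (a, b) \<in> P v}) < \<alpha> * real (card V)"
      by (rule real_less_of_less_nat_ceiling[of _ "\<alpha> * real n", folded j_def, unfolded n_def])
  qed
qed

lemma exists_undominated_committee_direct:
  assumes "1 \<le> k" "0 < \<alpha>" "\<alpha> < 1" "2 / (real k + 1) * (1 - ln \<alpha>) < \<alpha>"
    and el: "election V C P" and "k \<le> card C"
  shows "\<exists>S. S \<subseteq> C \<and> card S = k \<and> undominated \<alpha> V C P S"
proof -
  have "finite V" "V \<noteq> {}" "finite C" using el by (auto simp: election_def)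
  have "C \<noteq> {}" using \<open>k \<le> card C\<close> \<open>1 \<le> k\<close> by auto
  obtain U where U: "U \<subseteq> C" "card U \<le> k"
    "\<And>a. a \<in> C \<Longrightarrow> real (card {v \<in> V. \<forall>b\<in>U. (a, b) \<in> P v}) < \<alpha> * real (card V)"
    using obtain_sample_rarely_dominated[OF el \<open>C \<noteq> {}\<close> assms(1-4)] by blast
  obtain W where W: "U \<subseteq> W" "W \<subseteq> C" "card W = k"
    using exists_subset_between[OF U(2) \<open>k \<le> card C\<close> U(1) \<open>finite C\<close>] by blast
  have "real (card {v \<in> V. \<forall>b\<in>W. (a, b) \<in> P v}) < \<alpha> * real (card V)" if "a \<in> C" for a
  proof -
    have "card {v \<in> V. \<forall>b\<in>W. (a, b) \<in> P v} \<le> card {v \<in> V. \<forall>b\<in>U. (a, b) \<in> P v}"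
      using W(1) \<open>finite V\<close> by (intro card_mono) auto
    then show ?thesis using U(3)[OF that] by linarith
  qed
  then show ?thesis
    using W(2,3) dom_frac_lt[OF \<open>finite V\<close> \<open>V \<noteq> {}\<close>] by (auto simp: undominated_def)
qed

lemma recursive_bound_gap:
  fixes \<beta> \<sigma> \<tau> \<rho> :: real
  assumes "0 < \<rho>" "0 \<le> \<tau>" "2 * (\<tau> + \<rho>) \<le> \<beta>" "\<sigma> \<le> \<tau> + \<rho> / 2"
  shows "\<beta> * \<sigma> < \<beta> ^ 2 / 2 - (\<tau> + \<rho>) * \<rho> / 2"
proof -
  have "0 \<le> \<beta>" using assms by argo
  then have "\<beta> * (\<rho> / 2) \<le> \<beta> * (\<beta> / 2 - \<sigma>)"
    using assms by (intro mult_left_mono) auto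
  then have A: "\<beta> * \<sigma> \<le> \<beta> ^ 2 / 2 - \<beta> * \<rho> / 2"
    by (simp add: power2_eq_square algebra_simps)
  have "(2 * (\<tau> + \<rho>)) * (\<rho> / 2) \<le> \<beta> * (\<rho> / 2)"
    using assms by (intro mult_right_mono) auto
  then have B: "(\<tau> + \<rho>) * \<rho> \<le> \<beta> * \<rho> / 2" by (simp add: algebra_simps)
  have C: "0 < (\<tau> + \<rho>) * \<rho>" using assms by simp
  from A B C show ?thesis by linarith
qed

lemma obtain_committee_for_subelectorate:
  assumes H: "\<forall>V C P. election V C P \<and> k' \<le> card C \<longrightarrow>
      (\<exists>S. S \<subseteq> C \<and> card S = k' \<and> undominated \<alpha>' V C P S)"
    and el: "election V C P" and "Z \<subseteq> V" "k' \<le> card C" "0 \<le> \<alpha>'"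
  obtains S where "S \<subseteq> C" "card S \<le> k'"
    "\<And>a. a \<in> C \<Longrightarrow> real (card {v \<in> Z. \<forall>b\<in>S. (a, b) \<in> P v}) \<le> \<alpha>' * real (card Z)"
proof (cases "Z = {}")
  case True
  then show ?thesis using that[of "{}"] by simp
next
  case False
  have "finite Z" using \<open>Z \<subseteq> V\<close> el by (auto simp: election_def intro: finite_subset)
  have "election Z C P" using el \<open>Z \<subseteq> V\<close> \<open>finite Z\<close> False by (auto simp: election_def)
  then obtain S where S: "S \<subseteq> C" "card S = k'" "undominated \<alpha>' Z C P S"
    using H \<open>k' \<le> card C\<close> by blast
  have "real (card {v \<in> Z. \<forall>b\<in>S. (a, b) \<in> P v}) \<le> \<alpha>' * real (card Z)" if "a \<in> C" for a
    using S(3) that \<open>finite Z\<close> False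
    by (auto simp: undominated_def dom_frac_def card_gt_0_iff divide_less_eq less_imp_le)
  then show ?thesis using that S(1,2) by simp
qed

lemma dom_frac_lt_split:
  assumes "finite V" "V \<noteq> {}" "Z \<subseteq> V" "S \<subseteq> W" "U \<subseteq> W"
    and "real (card {v \<in> Z. \<forall>b\<in>S. (a, b) \<in> P v}) \<le> x * real (card V)"
    and "real (card {v \<in> V - Z. \<forall>b\<in>U. (a, b) \<in> P v}) < y * real (card V)"
    and "x + y \<le> \<gamma>"
  shows "dom_frac V P a W < \<gamma>"
proof (rule dom_frac_lt[OF assms(1,2)])
  have "{v \<in> V. \<forall>b\<in>W. (a, b) \<in> P v}
      \<subseteq> {v \<in> Z. \<forall>b\<in>S. (a, b) \<in> P v} \<union> {v \<in> V - Z. \<forall>b\<in>U. (a, b) \<in> P v}"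
    using assms(4,5) by blast
  moreover have "finite ({v \<in> Z. \<forall>b\<in>S. (a, b) \<in> P v} \<union> {v \<in> V - Z. \<forall>b\<in>U. (a, b) \<in> P v})"
    using assms(1,3) by (auto intro: finite_subset)
  ultimately have "card {v \<in> V. \<forall>b\<in>W. (a, b) \<in> P v}
      \<le> card {v \<in> Z. \<forall>b\<in>S. (a, b) \<in> P v} + card {v \<in> V - Z. \<forall>b\<in>U. (a, b) \<in> P v}"
    by (meson card_mono card_Un_le order_trans)
  moreover have "(x + y) * real (card V) \<le> \<gamma> * real (card V)"
    using assms(8) by (intro mult_right_mono) auto
  ultimately show "real (card {v \<in> V. \<forall>b\<in>W. (a, b) \<in> P v}) < \<gamma> * real (card V)"
    using assms(6,7) by (simp add: algebra_simps)
qed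

lemma exp_recursive_threshold:
  assumes "1 \<le> k'" "k' < k"
  shows "exp (- real (k - k') * (2 * ln (real k / real k') / (real k - real k'))) = (real k' / real k) ^ 2"
proof -
  have "- real (k - k') * (2 * ln (real k / real k') / (real k - real k')) = real 2 * ln (real k' / real k)"
    using assms by (simp add: of_nat_diff ln_div field_simps)
  then have "exp (- real (k - k') * (2 * ln (real k / real k') / (real k - real k')))
      = exp (ln (real k' / real k)) ^ 2"
    by (simp only: exp_of_nat_mult)
  also have "\<dots> = (real k' / real k) ^ 2" using assms by simp
  finally show ?thesis .
qed

lemma obtain_sample_rarely_dominated_outside:
  assumes el: "election V C P" and "C \<noteq> {}" "1 \<le> d" "0 \<le> \<tau>" "0 < \<rho>" "2 * (\<tau> + \<rho>) \<le> 1"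
  obtains U Z where "U \<subseteq> C" "card U \<le> d" "Z \<subseteq> V" "real (card Z) \<le> real (card V) * exp (- real d * \<tau>)"
    "\<And>a. a \<in> C \<Longrightarrow> real (card {v \<in> V - Z. \<forall>b\<in>U. (a, b) \<in> P v}) < 2 * (\<tau> + \<rho>) * real (card V)"
proof -
  define n where "n = card V"
  have "finite V" "V \<noteq> {}" using el by (auto simp: election_def)
  then have "0 < real n" by (simp add: n_def card_gt_0_iff)
  have "\<tau> \<le> 1" using assms(5,6) by argo
  define \<epsilon> where "\<epsilon> = (\<tau> + \<rho>) * \<rho> / 2"
  have "0 < \<epsilon>" using \<open>0 \<le> \<tau>\<close> \<open>0 < \<rho>\<close> by (simp add: \<epsilon>_def)
  define j where "j = nat \<lceil>2 * (\<tau> + \<rho>) * real n\<rceil>"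
  have "j \<le> card V"
    using mult_right_mono[OF \<open>2 * (\<tau> + \<rho>) \<le> 1\<close>, of "real n"]
    by (simp add: j_def n_def nat_le_iff ceiling_le_iff)
  have "2 * (\<tau> + \<rho>) * real n \<le> real j" unfolding j_def by (rule real_nat_ceiling_ge)
  then have "2 * (\<tau> + \<rho>) \<le> real j / real n" using \<open>0 < real n\<close> by (simp add: le_divide_eq)
  obtain cs s0 where cs: "set cs \<subseteq> C" "well_covering V C P j \<epsilon> cs" "0 < length cs" "s0 \<le> length cs"
      and \<sigma>: "\<tau> \<le> real s0 / real (length cs)" "real s0 / real (length cs) \<le> \<tau> + \<rho> / 2"
    using obtain_well_covering_list[OF el \<open>C \<noteq> {}\<close> \<open>j \<le> card V\<close> \<open>0 < \<epsilon>\<close> \<open>0 \<le> \<tau>\<close> \<open>\<tau> \<le> 1\<close>, of "\<rho> / 2"]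
      \<open>0 < \<rho>\<close> by auto
  define \<sigma> where "\<sigma> = real s0 / real (length cs)"
  obtain f where f: "f \<in> {..<d} \<rightarrow>\<^sub>E {..<length cs}"
    and few: "real (card {v \<in> V. s0 \<le> best_rank P cs d v f}) \<le> real n * (1 - \<sigma>) ^ d"
    using exists_sample_few_above[OF el cs(3,4) \<open>1 \<le> d\<close>] by (auto simp: n_def \<sigma>_def)
  define Z where "Z = {v \<in> V. s0 \<le> best_rank P cs d v f}"
  have "(1 - \<sigma>) ^ d \<le> exp (- real d * \<tau>)"
    using \<sigma> cs(3,4) \<open>0 \<le> \<tau>\<close> unfolding \<sigma>_def by (intro power_one_minus_le_exp) auto
  then have "real (card Z) \<le> real n * exp (- real d * \<tau>)"
    using few \<open>0 < real n\<close> unfolding Z_def by (meson mult_left_mono less_imp_le order_trans)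
  show ?thesis
  proof (rule that[OF card_sample_committee[OF cs(1) f] _ \<open>real (card Z) \<le> real n * exp (- real d * \<tau>)\<close>[unfolded n_def]])
    show "Z \<subseteq> V" by (auto simp: Z_def)
    fix a assume "a \<in> C"
    have "(\<Sum>v\<in>V - Z. real (best_rank P cs d v f - s0)) = 0"
      by (intro sum.neutral) (auto simp: Z_def)
    moreover have "real j / real n * \<sigma> < (real j / real n) ^ 2 / 2 - \<epsilon>"
      unfolding \<epsilon>_def \<sigma>_def
      by (rule recursive_bound_gap[OF \<open>0 < \<rho>\<close> \<open>0 \<le> \<tau>\<close> \<open>2 * (\<tau> + \<rho>) \<le> real j / real n\<close> \<sigma>(2)])
    ultimately have "card {v \<in> V - Z. \<forall>b\<in>(\<lambda>l. cs ! f l) ` {..<d}. (a, b) \<in> P v} < j"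
      unfolding n_def \<sigma>_def
      by (intro card_voters_preferring_to_sample_lt[OF el cs(2,3) \<open>1 \<le> d\<close> \<open>a \<in> C\<close>, where s = s0])
        auto
    then show "real (card {v \<in> V - Z. \<forall>b\<in>(\<lambda>l. cs ! f l) ` {..<d}. (a, b) \<in> P v})
        < 2 * (\<tau> + \<rho>) * real (card V)"
      by (rule real_less_of_less_nat_ceiling[of _ "2 * (\<tau> + \<rho>) * real n", folded j_def, unfolded n_def])
  qed
qed

lemma exists_undominated_committee_recursive:
  assumes "1 \<le> k'" "k' < k" "0 \<le> \<alpha>'"
    and H: "\<forall>V C P. election V C P \<and> k' \<le> card C \<longrightarrow>
      (\<exists>S. S \<subseteq> C \<and> card S = k' \<and> undominated \<alpha>' V C P S)"
    and \<gamma>: "(real k' / real k) ^ 2 * \<alpha>' + 4 * ln (real k / real k') / (real k - real k') < \<gamma>" "\<gamma> \<le> 1"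
    and el: "election V C P" and "k \<le> card C"
  shows "\<exists>S. S \<subseteq> C \<and> card S = k \<and> undominated \<gamma> V C P S"
proof -
  have "finite V" "V \<noteq> {}" "finite C" using el by (auto simp: election_def)
  have "C \<noteq> {}" using \<open>k \<le> card C\<close> \<open>k' < k\<close> by auto
  define \<tau> where "\<tau> = 2 * ln (real k / real k') / (real k - real k')"
  define r where "r = (real k' / real k) ^ 2"
  have "0 \<le> \<tau>" using assms(1,2) by (simp add: \<tau>_def)
  have "0 \<le> r * \<alpha>'" using \<open>0 \<le> \<alpha>'\<close> by (simp add: r_def)
  have "r * \<alpha>' + 2 * \<tau> < \<gamma>" using \<gamma>(1) by (simp add: r_def \<tau>_def)
  define \<rho> where "\<rho> = (\<gamma> - r * \<alpha>' - 2 * \<tau>) / 4"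
  have "0 < \<rho>" "2 * (\<tau> + \<rho>) \<le> 1" "r * \<alpha>' + 2 * (\<tau> + \<rho>) \<le> \<gamma>"
    using \<open>r * \<alpha>' + 2 * \<tau> < \<gamma>\<close> \<open>\<gamma> \<le> 1\<close> \<open>0 \<le> r * \<alpha>'\<close> unfolding \<rho>_def by argo+
  have "1 \<le> k - k'" using \<open>k' < k\<close> by simp
  \<comment> \<open>The voters in Z, deep with respect to the sample U, are served by a committee of size k'.\<close>
  obtain U Z where U: "U \<subseteq> C" "card U \<le> k - k'" and Z: "Z \<subseteq> V"
      "real (card Z) \<le> real (card V) * exp (- real (k - k') * \<tau>)"
    and shallow: "\<And>a. a \<in> C \<Longrightarrow>
      real (card {v \<in> V - Z. \<forall>b\<in>U. (a, b) \<in> P v}) < 2 * (\<tau> + \<rho>) * real (card V)"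
    using obtain_sample_rarely_dominated_outside[OF el \<open>C \<noteq> {}\<close> \<open>1 \<le> k - k'\<close> \<open>0 \<le> \<tau>\<close> \<open>0 < \<rho>\<close>
        \<open>2 * (\<tau> + \<rho>) \<le> 1\<close>] by blast
  have "exp (- real (k - k') * \<tau>) = r"
    unfolding \<tau>_def r_def by (rule exp_recursive_threshold[OF assms(1,2)])
  obtain S' where S': "S' \<subseteq> C" "card S' \<le> k'"
    "\<And>a. a \<in> C \<Longrightarrow> real (card {v \<in> Z. \<forall>b\<in>S'. (a, b) \<in> P v}) \<le> \<alpha>' * real (card Z)"
    using obtain_committee_for_subelectorate[OF H el Z(1) _ \<open>0 \<le> \<alpha>'\<close>] \<open>k' < k\<close> \<open>k \<le> card C\<close> by auto
  have "card (U \<union> S') \<le> k"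
    using card_Un_le[of U S'] U(2) S'(2) \<open>k' < k\<close> by linarith
  then obtain W where W: "U \<union> S' \<subseteq> W" "W \<subseteq> C" "card W = k"
    using exists_subset_between U(1) S'(1) \<open>k \<le> card C\<close> \<open>finite C\<close> by (metis Un_subset_iff)
  have "dom_frac V P a W < \<gamma>" if "a \<in> C" for a
  proof (rule dom_frac_lt_split[OF \<open>finite V\<close> \<open>V \<noteq> {}\<close> Z(1) _ _ _ shallow[OF that]
        \<open>r * \<alpha>' + 2 * (\<tau> + \<rho>) \<le> \<gamma>\<close>])
    show "real (card {v \<in> Z. \<forall>b\<in>S'. (a, b) \<in> P v}) \<le> r * \<alpha>' * real (card V)"
      using S'(3)[OF that] mult_left_mono[OF Z(2) \<open>0 \<le> \<alpha>'\<close>] \<open>exp (- real (k - k') * \<tau>) = r\<close>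
      by (simp add: mult_ac)
  qed (use W(1) in auto)
  then show ?thesis using W(2,3) by (auto simp: undominated_def)
qed

section \<open>The bounds on alpha\<close>

definition achievable_levels :: "nat \<Rightarrow> real set" where
  "achievable_levels k = {\<alpha>. \<forall>V C P. election V C P \<and> k \<le> card C \<longrightarrow>
      (\<exists>S. S \<subseteq> C \<and> card S = k \<and> undominated \<alpha> V C P S)}"

lemma alpha_eq_Inf_achievable_levels: "alpha k = Inf (achievable_levels k)"
  unfolding alpha_def achievable_levels_def ..

lemma dom_frac_le_one: "finite V \<Longrightarrow> dom_frac V P a S \<le> 1"
  unfolding dom_frac_def by (simp add: divide_le_eq_1 card_mono) (simp add: card_gt_0_iff)

lemma achievable_levels_gt_one: "1 < \<alpha> \<Longrightarrow> \<alpha> \<in> achievable_levels k"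
  unfolding achievable_levels_def
proof (intro CollectI allI impI)
  fix V C P assume "1 < \<alpha>" "election V C P \<and> k \<le> card C"
  then have "finite V" "k \<le> card C" by (auto simp: election_def)
  then obtain S where "S \<subseteq> C" "card S = k" by (meson obtain_subset_with_card_n)
  moreover have "undominated \<alpha> V C P S"
    unfolding undominated_def using dom_frac_le_one[OF \<open>finite V\<close>] \<open>1 < \<alpha>\<close> by (auto intro: le_less_trans)
  ultimately show "\<exists>S. S \<subseteq> C \<and> card S = k \<and> undominated \<alpha> V C P S" by blast
qed

lemma achievable_levels_pos:
  assumes "1 \<le> k" "\<alpha> \<in> achievable_levels k"
  shows "0 < \<alpha>"
proof -
  define P :: "nat \<Rightarrow> (nat \<times> nat) set" where "P v = {(a, b). a < b \<and> b < k}" for v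
  have "election {0} {..<k} P"
    unfolding election_def strict_linear_order_on_def P_def
    by (auto simp: trans_def irrefl_def total_on_def)
  moreover have "k \<le> card {..<k}" by simp
  ultimately obtain S where "undominated \<alpha> {0} {..<k} P S"
    using assms(2) unfolding achievable_levels_def by blast
  then have "dom_frac {0} P 0 S < \<alpha>" using \<open>1 \<le> k\<close> by (simp add: undominated_def)
  moreover have "0 \<le> dom_frac {0} P 0 S" by (simp add: dom_frac_def)
  ultimately show ?thesis by simp
qed

lemma bdd_below_achievable_levels: "1 \<le> k \<Longrightarrow> bdd_below (achievable_levels k)"
  using achievable_levels_pos by (meson bdd_below.I less_imp_le)

lemma achievable_levels_nonempty: "achievable_levels k \<noteq> {}"
  using achievable_levels_gt_one[of 2 k] by auto

lemma alpha_le: "1 \<le> k \<Longrightarrow> \<alpha> \<in> achievable_levels k \<Longrightarrow> alpha k \<le> \<alpha>"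
  unfolding alpha_eq_Inf_achievable_levels by (rule cInf_lower) (use bdd_below_achievable_levels in auto)

lemma alpha_nonneg: "1 \<le> k \<Longrightarrow> 0 \<le> alpha k"
  unfolding alpha_eq_Inf_achievable_levels
  by (rule cInf_greatest[OF achievable_levels_nonempty]) (use achievable_levels_pos in force)

lemma alpha_le_one: "1 \<le> k \<Longrightarrow> alpha k \<le> 1"
  by (rule field_le_epsilon) (use alpha_le achievable_levels_gt_one in force)

lemma alpha_direct_bound:
  assumes "1 \<le> k"
  shows "alpha k / (1 - ln (alpha k)) \<le> 2 / (real k + 1)"
proof (rule ccontr)
  define A where "A = alpha k"
  define c where "c = 2 / (real k + 1)"
  have "0 \<le> A" "A \<le> 1" using alpha_nonneg alpha_le_one \<open>1 \<le> k\<close> by (auto simp: A_def)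
  assume "\<not> ?thesis"
  then have "c < A / (1 - ln A)" by (simp add: A_def c_def)
  moreover have "0 < c" by (simp add: c_def)
  ultimately have "0 < A" using \<open>0 \<le> A\<close> by (cases "A = 0") auto
  then have "ln A \<le> 0" using \<open>A \<le> 1\<close> by simp
  then have "0 < 1 - ln A" by simp
  define g where "g x = x - c * (1 - ln x)" for x
  have "0 < g A" using \<open>c < A / (1 - ln A)\<close> \<open>0 < 1 - ln A\<close> by (simp add: g_def pos_less_divide_eq)
  \<comment> \<open>By continuity the gap persists slightly below the infimum \<open>A\<close>.\<close>
  have "isCont g A" unfolding g_def using \<open>0 < A\<close> by (intro continuous_intros) auto
  then have "(g \<longlongrightarrow> g A) (at_left A)"
    by (simp add: isCont_def tendsto_mono[OF at_within_le_at])
  then have "eventually (\<lambda>x. 0 < g x) (at_left A)" using \<open>0 < g A\<close> by (rule order_tendstoD)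
  moreover have "eventually (\<lambda>x. x \<in> {0<..<A}) (at_left A)"
    using \<open>0 < A\<close> by (rule eventually_at_left_real)
  ultimately have "eventually (\<lambda>x. 0 < g x \<and> x \<in> {0<..<A}) (at_left A)"
    by (rule eventually_conj)
  then obtain x where "0 < g x" "0 < x" "x < A"
    using eventually_happens'[OF trivial_limit_at_left_real] by auto
  then have "x \<in> achievable_levels k"
    using exists_undominated_committee_direct[OF \<open>1 \<le> k\<close>] \<open>A \<le> 1\<close>
    by (auto simp: achievable_levels_def g_def c_def)
  then show False using alpha_le[OF \<open>1 \<le> k\<close>] \<open>x < A\<close> by (fastforce simp: A_def)
qed

lemma alpha_recursive_bound:
  assumes "1 \<le> k'" "k' < k"
  shows "alpha k \<le> (real k' / real k) ^ 2 * alpha k' + 4 * ln (real k / real k') / (real k - real k')"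
proof (rule field_le_epsilon)
  fix e :: real assume "0 < e"
  define r where "r = (real k' / real k) ^ 2"
  define b where "b = 4 * ln (real k / real k') / (real k - real k')"
  have "0 \<le> r" "r \<le> 1" using assms by (auto simp: r_def power_le_one)
  have "Inf (achievable_levels k') < alpha k' + e / 2"
    using \<open>0 < e\<close> by (simp add: alpha_eq_Inf_achievable_levels)
  then obtain x where x: "x \<in> achievable_levels k'" "x < alpha k' + e / 2"
    using cInf_lessD[OF achievable_levels_nonempty] by blast
  have "0 < x" using achievable_levels_pos[OF \<open>1 \<le> k'\<close> x(1)] .
  define \<gamma> where "\<gamma> = r * x + b + e / 2"
  have "\<gamma> \<in> achievable_levels k"
  proof (cases "\<gamma> \<le> 1")
    case True
    have "r * x + b < \<gamma>" using \<open>0 < e\<close> by (simp add: \<gamma>_def)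
    then show ?thesis
      using exists_undominated_committee_recursive[OF assms less_imp_le[OF \<open>0 < x\<close>] _ _ True] x(1)
      by (auto simp: achievable_levels_def r_def b_def)
  next
    case False
    then show ?thesis by (simp add: achievable_levels_gt_one)
  qed
  then have "alpha k \<le> \<gamma>" using alpha_le assms by simp
  also have "\<dots> \<le> r * alpha k' + b + e"
  proof -
    have "r * x \<le> r * alpha k' + r * (e / 2)"
      using mult_left_mono[OF less_imp_le[OF x(2)] \<open>0 \<le> r\<close>] by (simp add: distrib_left)
    moreover have "r * (e / 2) \<le> e / 2"
      using \<open>0 < e\<close> \<open>0 \<le> r\<close> \<open>r \<le> 1\<close> by (intro mult_left_le_one_le) auto
    ultimately show ?thesis unfolding \<gamma>_def by linarith
  qed
  finally show "alpha k \<le> (real k' / real k) ^ 2 * alpha k' + 4 * ln (real k / real k') / (real k - real k') + e"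
    by (simp add: r_def b_def)
qed

theorem theorem6:
  fixes k :: nat
  assumes "k \<ge> 1"
  shows "alpha k / (1 - ln (alpha k)) \<le> 2 / (real k + 1)
    \<and> (k \<ge> 2 \<longrightarrow> alpha k \<le> Min ((\<lambda>k'. (real k' / real k)^2 * alpha k'
          + 4 * ln (real k / real k') / (real k - real k')) ` {1..<k}))"
proof (intro conjI impI)
  show "alpha k / (1 - ln (alpha k)) \<le> 2 / (real k + 1)"
    using alpha_direct_bound[OF assms] .
next
  assume "k \<ge> 2"
  then show "alpha k \<le> Min ((\<lambda>k'. (real k' / real k)^2 * alpha k'
      + 4 * ln (real k / real k') / (real k - real k')) ` {1..<k})"
    by (subst Min_ge_iff) (auto intro: alpha_recursive_bound)
qed

end
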